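(* Let $G$ be a torsion-free group, $\mathbb{F}$ a field, $\alpha$ a zero divisor in $\mathbb{F}[G]$ with $|supp(\alpha)|=4$ and $|S_\alpha|=12$, and $\beta$ a non-zero element of $\mathbb{F}[G]$ with $\alpha\beta=0$. If the maximum degree of $Z(\alpha,\beta)$ is $5$, then the number of vertices of degree $5$ in $Z(\alpha,\beta)$ is a multiple of $6$.
   Context: $supp(\gamma)=\{x\in G:\gamma_x\ne0\}$; $S_\alpha=\{h^{-1}h':h\ne h',\ h,h'\in supp(\alpha)\}$. The zero-divisor graph $Z(\alpha,\beta)$ is the multigraph with vertex set $supp(\beta)$ whose edges are the sets $\{(h,h',g,g'),(h',h,g',g)\}$ with $h,h'\in supp(\alpha)$, $g,g'\in supp(\beta)$, $g\ne g'$, $hg=h'g'$, each joining $g$ and $g'$; the degree of a vertex is the number of incident edges. *)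

theory Defs
  imports Main
begin

text \<open>The group G is the type 'g of class group_add (written additively, not
necessarily commutative): the paper's product hg is h + g, the inverse h^-1 is -h.
Elements of the group ring F[G] are finitely supported functions 'g => 'f.\<close>

definition torsion_free_group :: "'g::group_add itself \<Rightarrow> bool" where
  "torsion_free_group _ \<longleftrightarrow> (\<forall>x::'g. x \<noteq> 0 \<longrightarrow> (\<forall>n::nat. n > 0 \<longrightarrow> ((+) x ^^ n) 0 \<noteq> 0))"

definition supp :: "('g \<Rightarrow> 'f::zero) \<Rightarrow> 'g set" where
  "supp \<gamma> = {x. \<gamma> x \<noteq> 0}"

definition in_group_ring :: "('g \<Rightarrow> 'f::zero) \<Rightarrow> bool" where
  "in_group_ring \<gamma> \<longleftrightarrow> finite (supp \<gamma>)"

definition gr_mult :: "('g::group_add \<Rightarrow> 'f::field) \<Rightarrow> ('g \<Rightarrow> 'f) \<Rightarrow> 'g \<Rightarrow> 'f" where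
  "gr_mult \<alpha> \<beta> = (\<lambda>x. \<Sum>h\<in>supp \<alpha>. \<alpha> h * \<beta> (- h + x))"

definition zero_divisor :: "('g::group_add \<Rightarrow> 'f::field) \<Rightarrow> bool" where
  "zero_divisor \<alpha> \<longleftrightarrow> in_group_ring \<alpha> \<and> \<alpha> \<noteq> (\<lambda>_. 0) \<and>
     (\<exists>\<beta>. in_group_ring \<beta> \<and> \<beta> \<noteq> (\<lambda>_. 0) \<and> (gr_mult \<alpha> \<beta> = (\<lambda>_. 0) \<or> gr_mult \<beta> \<alpha> = (\<lambda>_. 0)))"

definition S_set :: "('g::group_add \<Rightarrow> 'f::zero) \<Rightarrow> 'g set" where
  "S_set \<alpha> = {- h + h' | h h'. h \<noteq> h' \<and> h \<in> supp \<alpha> \<and> h' \<in> supp \<alpha>}"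

text \<open>Edges of the zero-divisor graph Z(\<alpha>,\<beta>); the edge {(h,h',g,g'),(h',h,g',g)} joins g and g'.\<close>
definition zd_edges :: "('g::group_add \<Rightarrow> 'f::zero) \<Rightarrow> ('g \<Rightarrow> 'f) \<Rightarrow> ('g \<times> 'g \<times> 'g \<times> 'g) set set" where
  "zd_edges \<alpha> \<beta> = {{(h, h', g, g'), (h', h, g', g)} | h h' g g'.
      h \<in> supp \<alpha> \<and> h' \<in> supp \<alpha> \<and> g \<in> supp \<beta> \<and> g' \<in> supp \<beta> \<and> g \<noteq> g' \<and> h + g = h' + g'}"

definition zd_degree :: "('g::group_add \<Rightarrow> 'f::zero) \<Rightarrow> ('g \<Rightarrow> 'f) \<Rightarrow> 'g \<Rightarrow> nat" where
  "zd_degree \<alpha> \<beta> v = card {e \<in> zd_edges \<alpha> \<beta>. \<exists>h h' g'. (h, h', v, g') \<in> e}"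

end

theory Submission
  imports Defs
begin

text \<open>For a vertex v the edges at v correspond to pairs h \<noteq> h' in supp \<alpha> with
h + v = h' + g' for some g' in supp \<beta>; hence deg v is the sum over h \<in> supp \<alpha> of
r(h + v) - 1, where r(x) counts the representations x = a + b with a \<in> supp \<alpha>,
b \<in> supp \<beta>. Since \<alpha>\<beta> = 0, no r(h + v) equals 1, so deg v \<ge> |supp \<alpha>| = 4; as
deg v \<le> 5, every r(h + v) is 2 or 3, and deg v = 5 exactly when r(h + v) = 3 for a
single h.
Thus the degree-5 vertices correspond to the pairs (h, v) with r(h + v) = 3; these
come in fibres of size 3 of the map (h, v) \<mapsto> h + v, the remaining pairs in fibres
of size 2, and there are 4|supp \<beta>| pairs in total. So the count is divisible by 3
and even.\<close>

definition rep_count :: "'g::plus set \<Rightarrow> 'g set \<Rightarrow> 'g \<Rightarrow> nat" where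
  "rep_count A B x = card {p \<in> A \<times> B. fst p + snd p = x}"

lemma zd_degree_eq_card_Sigma:
  fixes \<alpha> \<beta> :: "'g::group_add \<Rightarrow> 'f::zero"
  assumes v: "v \<in> supp \<beta>"
  shows "zd_degree \<alpha> \<beta> v =
    card (SIGMA h:supp \<alpha>. {h' \<in> supp \<alpha>. h' \<noteq> h \<and> -h' + h + v \<in> supp \<beta>})"
proof -
  define P where "P = (SIGMA h:supp \<alpha>. {h' \<in> supp \<alpha>. h' \<noteq> h \<and> -h' + h + v \<in> supp \<beta>})"
  define edge where "edge = (\<lambda>(h, h'). {(h, h', v, -h' + h + v), (h', h, -h' + h + v, v)})"
  have moved: "-h' + h + v \<noteq> v" if "h' \<noteq> h" for h h' :: 'g
    using that by (metis add_left_cancel add_right_imp_eq add.assoc add_minus_cancel)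
  have "inj_on edge P"
  proof (rule inj_onI)
    fix p q assume "p \<in> P" "q \<in> P" "edge p = edge q"
    then show "p = q"
      using moved unfolding P_def edge_def by (cases p, cases q) (auto simp: doubleton_eq_iff)
  qed
  moreover have "edge ` P = {e \<in> zd_edges \<alpha> \<beta>. \<exists>h h' g'. (h, h', v, g') \<in> e}"
  proof (intro equalityI subsetI)
    fix e assume "e \<in> edge ` P"
    then obtain h h' where hh': "(h, h') \<in> P" and e: "e = edge (h, h')" by auto
    have "h + v = h' + (-h' + h + v)" by (simp add: add.assoc)
    with hh' moved[of h' h] v have "e \<in> zd_edges \<alpha> \<beta>"
      unfolding e edge_def P_def zd_edges_def mem_Collect_eq
      by (intro exI[of _ h] exI[of _ h'] exI[of _ v] exI[of _ "-h' + h + v"]) auto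
    moreover have "(h, h', v, -h' + h + v) \<in> e" unfolding e edge_def by simp
    ultimately show "e \<in> {e \<in> zd_edges \<alpha> \<beta>. \<exists>h h' g'. (h, h', v, g') \<in> e}" by blast
  next
    fix e assume "e \<in> {e \<in> zd_edges \<alpha> \<beta>. \<exists>h h' g'. (h, h', v, g') \<in> e}"
    then obtain a a' g g' x y z where e: "e = {(a, a', g, g'), (a', a, g', g)}"
      and ab: "a \<in> supp \<alpha>" "a' \<in> supp \<alpha>" "g \<in> supp \<beta>" "g' \<in> supp \<beta>" "g \<noteq> g'"
      and sum: "a + g = a' + g'" and at_v: "(x, y, v, z) \<in> e"
      unfolding zd_edges_def by blast
    have g': "g' = -a' + a + g" and g: "g = -a + a' + g'"
      using sum by (metis add.assoc minus_add_cancel)+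
    have "a \<noteq> a'" using ab(5) sum by auto
    show "e \<in> edge ` P"
    proof (cases "g = v")
      case True
      then have "(a, a') \<in> P" "e = edge (a, a')"
        using ab \<open>a \<noteq> a'\<close> g' e unfolding P_def edge_def by auto
      then show ?thesis by blast
    next
      case False
      then have "g' = v" using at_v e by auto
      then have "(a', a) \<in> P" "e = edge (a', a)"
        using ab \<open>a \<noteq> a'\<close> g e unfolding P_def edge_def by auto
      then show ?thesis by blast
    qed
  qed
  ultimately show ?thesis
    unfolding zd_degree_def P_def[symmetric] by (metis card_image)
qed

lemma card_other_reps:
  fixes A B :: "'g::group_add set"
  assumes "finite A" "h \<in> A" "v \<in> B"
  shows "card {h' \<in> A. h' \<noteq> h \<and> -h' + h + v \<in> B} = rep_count A B (h + v) - 1"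
proof -
  let ?X = "{h' \<in> A. -h' + h + v \<in> B}"
  have reps: "(\<lambda>h'. (h', -h' + h + v)) ` ?X = {p \<in> A \<times> B. fst p + snd p = h + v}"
  proof (intro equalityI subsetI)
    fix p assume "p \<in> {p \<in> A \<times> B. fst p + snd p = h + v}"
    moreover have "snd p = -fst p + h + v" if "fst p + snd p = h + v"
      using that by (metis add.assoc minus_add_cancel)
    ultimately show "p \<in> (\<lambda>h'. (h', -h' + h + v)) ` ?X"
      by (auto intro!: image_eqI[of p _ "fst p"])
  qed (auto simp: add.assoc)
  have "inj_on (\<lambda>h'. (h', -h' + h + v)) ?X" by (rule inj_onI) simp
  then have "rep_count A B (h + v) = card ?X"
    unfolding rep_count_def reps[symmetric] by (rule card_image)
  moreover have "{h' \<in> A. h' \<noteq> h \<and> -h' + h + v \<in> B} = ?X - {h}"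
    by auto
  ultimately show ?thesis using assms by (simp add: card_Diff_singleton)
qed

lemma zd_degree_eq_sum_rep_count:
  fixes \<alpha> \<beta> :: "'g::group_add \<Rightarrow> 'f::zero"
  assumes "finite (supp \<alpha>)" "v \<in> supp \<beta>"
  shows "zd_degree \<alpha> \<beta> v = (\<Sum>h\<in>supp \<alpha>. rep_count (supp \<alpha>) (supp \<beta>) (h + v) - 1)"
  using assms by (simp add: zd_degree_eq_card_Sigma card_SigmaI card_other_reps)

text \<open>If h + v had a unique representation, the coefficient of h + v in \<alpha>\<beta> would
be the single nonzero product \<alpha>_h \<beta>_v.\<close>

lemma rep_count_ge_2:
  fixes \<alpha> \<beta> :: "'g::group_add \<Rightarrow> 'f::field"
  assumes fin: "finite (supp \<alpha>)" and h: "h \<in> supp \<alpha>" and v: "v \<in> supp \<beta>"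
    and zero: "gr_mult \<alpha> \<beta> = (\<lambda>_. 0)"
  shows "rep_count (supp \<alpha>) (supp \<beta>) (h + v) \<ge> 2"
proof (rule ccontr)
  assume "\<not> ?thesis"
  then have "card {h' \<in> supp \<alpha>. h' \<noteq> h \<and> -h' + h + v \<in> supp \<beta>} = 0"
    using card_other_reps[OF fin h v] by simp
  then have other: "\<beta> (- h' + (h + v)) = 0" if "h' \<in> supp \<alpha> - {h}" for h'
    using that fin by (auto simp: supp_def add.assoc)
  have "0 = gr_mult \<alpha> \<beta> (h + v)" using zero by simp
  also have "\<dots> = \<alpha> h * \<beta> (- h + (h + v)) + (\<Sum>h'\<in>supp \<alpha> - {h}. \<alpha> h' * \<beta> (- h' + (h + v)))"
    unfolding gr_mult_def using fin h by (simp add: sum.remove)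
  also have "\<dots> = \<alpha> h * \<beta> v"
    using other by (simp add: add.assoc[symmetric])
  finally show False using h v by (simp add: supp_def)
qed

lemma zd_degree_eq_card_plus_excess:
  fixes \<alpha> \<beta> :: "'g::group_add \<Rightarrow> 'f::field"
  assumes "finite (supp \<alpha>)" "v \<in> supp \<beta>" "gr_mult \<alpha> \<beta> = (\<lambda>_. 0)"
  shows "zd_degree \<alpha> \<beta> v =
    card (supp \<alpha>) + (\<Sum>h\<in>supp \<alpha>. rep_count (supp \<alpha>) (supp \<beta>) (h + v) - 2)"
proof -
  have "(\<Sum>h\<in>supp \<alpha>. rep_count (supp \<alpha>) (supp \<beta>) (h + v) - 1) =
        (\<Sum>h\<in>supp \<alpha>. 1 + (rep_count (supp \<alpha>) (supp \<beta>) (h + v) - 2))"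
  proof (rule sum.cong)
    fix h assume "h \<in> supp \<alpha>"
    with rep_count_ge_2[OF assms(1) _ assms(2,3)]
    show "rep_count (supp \<alpha>) (supp \<beta>) (h + v) - 1 = 1 + (rep_count (supp \<alpha>) (supp \<beta>) (h + v) - 2)"
      by fastforce
  qed simp
  then show ?thesis
    using assms by (simp add: zd_degree_eq_sum_rep_count sum_Suc)
qed

lemma sum_le_1_nat:
  fixes e :: "'a \<Rightarrow> nat"
  assumes "finite A" "sum e A \<le> 1"
  shows "\<forall>x\<in>A. e x \<le> 1" and "sum e A = card {x \<in> A. e x \<noteq> 0}"
proof -
  show le: "\<forall>x\<in>A. e x \<le> 1"
    using assms member_le_sum[of _ A e] by (metis le_trans zero_le)
  have "sum e A = sum e {x \<in> A. e x \<noteq> 0}"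
    using assms(1) by (intro sum.mono_neutral_right) auto
  also have "\<dots> = sum (\<lambda>_. 1) {x \<in> A. e x \<noteq> 0}"
    using le by (intro sum.cong) (auto simp: le_Suc_eq)
  finally show "sum e A = card {x \<in> A. e x \<noteq> 0}" by simp
qed

lemma card_eq_mult_card_image_if_fibres_const:
  assumes "finite W" "\<And>p. p \<in> W \<Longrightarrow> card {q \<in> W. s q = s p} = c"
  shows "card W = c * card (s ` W)"
proof -
  have "card W = (\<Sum>y\<in>s ` W. card {q \<in> W. s q = y})"
    using sum.group[OF assms(1) finite_imageI[OF assms(1)] image_subset_iff[THEN iffD2],
        of s s "\<lambda>_. 1 :: nat"] by simp
  also have "\<dots> = (\<Sum>y\<in>s ` W. c)"
    using assms(2) by (intro sum.cong) auto
  finally show ?thesis by simp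
qed

lemma rep_count_dvd_card:
  fixes A B :: "'g::plus set"
  assumes "finite A" "finite B"
  shows "c dvd card {p \<in> A \<times> B. rep_count A B (fst p + snd p) = c}"
proof -
  let ?W = "{p \<in> A \<times> B. rep_count A B (fst p + snd p) = c}"
  have "{q \<in> ?W. fst q + snd q = fst p + snd p} = {q \<in> A \<times> B. fst q + snd q = fst p + snd p}"
    if "p \<in> ?W" for p
    using that by auto
  then have "card ?W = c * card ((\<lambda>p. fst p + snd p) ` ?W)"
    using assms by (intro card_eq_mult_card_image_if_fibres_const) (auto simp: rep_count_def)
  then show ?thesis by simp
qed

lemma six_dvd_card_triple_reps:
  fixes A B :: "'g::plus set"
  assumes "finite A" "finite B" "even (card A)"
    and two_or_three: "\<And>p. p \<in> A \<times> B \<Longrightarrow> rep_count A B (fst p + snd p) \<in> {2, 3}"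
  shows "6 dvd card {p \<in> A \<times> B. rep_count A B (fst p + snd p) = 3}"
proof -
  let ?T = "{p \<in> A \<times> B. rep_count A B (fst p + snd p) = 3}"
  let ?U = "{p \<in> A \<times> B. rep_count A B (fst p + snd p) = 2}"
  have "A \<times> B = ?T \<union> ?U" using two_or_three by auto
  moreover have "card (?T \<union> ?U) = card ?T + card ?U"
    using assms by (intro card_Un_disjoint) auto
  ultimately have "card ?T + card ?U = card A * card B"
    using assms by (simp add: card_cartesian_product)
  then have "even (card ?T + card ?U)"
    using assms(3) by simp
  moreover have "3 dvd card ?T" "2 dvd card ?U"
    using rep_count_dvd_card[OF assms(1,2)] by blast+
  ultimately show ?thesis by presburger
qed

lemma degree_five_vertices:
  fixes \<alpha> \<beta> :: "'g::group_add \<Rightarrow> 'f::field"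
  assumes fin: "finite (supp \<alpha>)" and card4: "card (supp \<alpha>) = 4"
    and zero: "gr_mult \<alpha> \<beta> = (\<lambda>_. 0)"
    and le5: "\<And>v. v \<in> supp \<beta> \<Longrightarrow> zd_degree \<alpha> \<beta> v \<le> 5"
  shows "\<And>p. p \<in> supp \<alpha> \<times> supp \<beta> \<Longrightarrow> rep_count (supp \<alpha>) (supp \<beta>) (fst p + snd p) \<in> {2, 3}"
    and "card {v \<in> supp \<beta>. zd_degree \<alpha> \<beta> v = 5} =
      card {p \<in> supp \<alpha> \<times> supp \<beta>. rep_count (supp \<alpha>) (supp \<beta>) (fst p + snd p) = 3}"
proof -
  let ?r = "\<lambda>h v. rep_count (supp \<alpha>) (supp \<beta>) (h + v)"
  let ?R = "\<lambda>v. {h \<in> supp \<alpha>. ?r h v = 3}"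
  let ?T = "{p \<in> supp \<alpha> \<times> supp \<beta>. ?r (fst p) (snd p) = 3}"
  have two_or_three: "\<forall>h\<in>supp \<alpha>. ?r h v \<in> {2, 3}"
    and deg: "zd_degree \<alpha> \<beta> v = 4 + card (?R v)"
    and at_most_one: "card (?R v) \<le> 1" if v: "v \<in> supp \<beta>" for v
  proof -
    have excess: "(\<Sum>h\<in>supp \<alpha>. ?r h v - 2) \<le> 1"
      using le5[OF v] zd_degree_eq_card_plus_excess[OF fin v zero] card4 by simp
    have "?r h v \<in> {2, 3}" if "h \<in> supp \<alpha>" for h
      using rep_count_ge_2[OF fin that v zero] sum_le_1_nat(1)[OF fin excess] that by fastforce
    then show "\<forall>h\<in>supp \<alpha>. ?r h v \<in> {2, 3}" by blast
    then have "{h \<in> supp \<alpha>. ?r h v - 2 \<noteq> 0} = ?R v" by auto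
    then have "(\<Sum>h\<in>supp \<alpha>. ?r h v - 2) = card (?R v)"
      using sum_le_1_nat(2)[OF fin excess] by simp
    then show "zd_degree \<alpha> \<beta> v = 4 + card (?R v)" "card (?R v) \<le> 1"
      using zd_degree_eq_card_plus_excess[OF fin v zero] card4 excess by simp_all
  qed
  show "?r (fst p) (snd p) \<in> {2, 3}" if "p \<in> supp \<alpha> \<times> supp \<beta>" for p
    using two_or_three that by (cases p) auto
  have "{v \<in> supp \<beta>. zd_degree \<alpha> \<beta> v = 5} = snd ` ?T"
  proof (intro equalityI subsetI)
    fix v assume "v \<in> {v \<in> supp \<beta>. zd_degree \<alpha> \<beta> v = 5}"
    then have v: "v \<in> supp \<beta>" and "card (?R v) = 1" using deg by auto
    then obtain h where "?R v = {h}" by (auto simp: card_1_singleton_iff)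
    then have "(h, v) \<in> ?T" using v by auto
    then show "v \<in> snd ` ?T" by force
  next
    fix v assume "v \<in> snd ` ?T"
    then obtain h where h: "h \<in> ?R v" and v: "v \<in> supp \<beta>" by auto
    then have "card (?R v) \<noteq> 0" using fin by auto
    then show "v \<in> {v \<in> supp \<beta>. zd_degree \<alpha> \<beta> v = 5}"
      using deg[OF v] at_most_one[OF v] v by simp
  qed
  moreover have "inj_on snd ?T"
  proof (rule inj_onI)
    fix p q assume pq: "p \<in> ?T" "q \<in> ?T" "snd p = snd q"
    then have "fst p \<in> ?R (snd p)" "fst q \<in> ?R (snd p)" by auto
    moreover have "finite (?R (snd p))" using fin by simp
    ultimately have "fst p = fst q"
      using at_most_one[of "snd p"] pq(1) by (auto simp: card_le_Suc0_iff_eq)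
    then show "p = q" using pq(3) by (simp add: prod_eq_iff)
  qed
  ultimately show "card {v \<in> supp \<beta>. zd_degree \<alpha> \<beta> v = 5} = card ?T"
    by (simp add: card_image)
qed

theorem mainTheorem12:
  fixes \<alpha> \<beta> :: "'g::group_add \<Rightarrow> 'f::field"
  assumes "torsion_free_group TYPE('g)"
    and "zero_divisor \<alpha>"
    and "card (supp \<alpha>) = 4"
    and "card (S_set \<alpha>) = 12"
    and "in_group_ring \<beta>" and "\<beta> \<noteq> (\<lambda>_. 0)"
    and "gr_mult \<alpha> \<beta> = (\<lambda>_. 0)"
    and "Max (zd_degree \<alpha> \<beta> ` supp \<beta>) = 5"
  shows "6 dvd card {v \<in> supp \<beta>. zd_degree \<alpha> \<beta> v = 5}"
proof -
  have fin\<alpha>: "finite (supp \<alpha>)" and fin\<beta>: "finite (supp \<beta>)"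
    using assms(2,5) unfolding zero_divisor_def in_group_ring_def by auto
  have le5: "zd_degree \<alpha> \<beta> v \<le> 5" if "v \<in> supp \<beta>" for v
    using Max_ge[OF finite_imageI[OF fin\<beta>] imageI[OF that], of "zd_degree \<alpha> \<beta>"] assms(8) by simp
  note reps = degree_five_vertices[OF fin\<alpha> assms(3,7) le5]
  have "6 dvd card {p \<in> supp \<alpha> \<times> supp \<beta>. rep_count (supp \<alpha>) (supp \<beta>) (fst p + snd p) = 3}"
    using six_dvd_card_triple_reps[OF fin\<alpha> fin\<beta> _ reps(1)] assms(3) by simp
  with reps(2) show ?thesis by simp
qed

end
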